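(* Let $0\le f\in L^1[-\pi,\pi]$, $b\in(-\pi,0)\cup(0,\pi)$, let $I=[b,\pi]$ if $b>0$ and $I=[-\pi,b]$ if $b<0$, and let $f_H$ be the polarization of $f$ with respect to $b$. Then: (a) for $x\in I$ and $x'=2b-x$: $u_f(x)+u_f(x')\le u_{f_H}(x)+u_{f_H}(x')$; (b) for $x\in I$ and $x'=2b-x$: $u_f(x)\le u_{f_H}(x')$; (c) if $b>0$ and $x\in[-\pi,b]$ (respectively $b<0$ and $x\in[b,\pi]$), then $u_f(x)\le u_{f_H}(x)$. Moreover, for $b>0$ (resp. $b<0$) the following are equivalent: (i) equality $u_f(x)=u_{f_H}(x)$ holds for some $x\in(-\pi,b]$ (resp. $x\in[b,\pi)$); (ii) it holds for all $x\in(-\pi,b]$ (resp. $x\in[b,\pi)$); (iii) $u_f\equiv u_{f_H}$ on $[-\pi,\pi]$; (iv) $f=f_H$ a.e. on $[-\pi,\pi]$.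
   Context: $G(x,y)=-\frac{xy}{2\pi}-\frac12|x-y|+\frac{\pi}{2}$ on $[-\pi,\pi]^2$; for $0\le g\in L^1[-\pi,\pi]$, $u_g(x)=\int_{-\pi}^{\pi}G(x,y)g(y)\,dy$ (the solution of $-u''=g$ on $(-\pi,\pi)$, $u(\pm\pi)=0$). Polarization of $f$ with respect to $b$: if $b\in(0,\pi)$, $f_H(x)=f(x)$ for $x\in[-\pi,2b-\pi)$, $f_H(x)=\max\{f(x),f(2b-x)\}$ for $x\in[2b-\pi,b]$, $f_H(x)=\min\{f(x),f(2b-x)\}$ for $x\in[b,\pi]$; if $b\in(-\pi,0)$, $f_H(x)=\min\{f(x),f(2b-x)\}$ for $x\in[-\pi,b]$, $f_H(x)=\max\{f(x),f(2b-x)\}$ for $x\in[b,2b+\pi]$, $f_H(x)=f(x)$ for $x\in(2b+\pi,\pi]$. *)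

theory Defs
  imports "HOL-Analysis.Analysis"
begin

definition green :: "real \<Rightarrow> real \<Rightarrow> real" where
  "green x y = - (x * y) / (2 * pi) - \<bar>x - y\<bar> / 2 + pi / 2"

definition upot :: "(real \<Rightarrow> real) \<Rightarrow> real \<Rightarrow> real" where
  "upot g x = (LINT y:{-pi..pi}|lborel. green x y * g y)"

definition polar :: "real \<Rightarrow> (real \<Rightarrow> real) \<Rightarrow> real \<Rightarrow> real" where
  "polar b f x =
    (if 0 < b then
       (if -pi \<le> x \<and> x < 2*b - pi then f x
        else if 2*b - pi \<le> x \<and> x \<le> b then max (f x) (f (2*b - x))
        else if b \<le> x \<and> x \<le> pi then min (f x) (f (2*b - x))
        else f x)
     else if b < 0 then
       (if -pi \<le> x \<and> x \<le> b then min (f x) (f (2*b - x))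
        else if b \<le> x \<and> x \<le> 2*b + pi then max (f x) (f (2*b - x))
        else if 2*b + pi < x \<and> x \<le> pi then f x
        else f x)
     else f x)"

end

theory Submission
  imports Defs
begin

(* Reflection x |-> -x turns polarization at b < 0 into polarization at -b > 0, so let b > 0.
   The reflection y |-> 2b - y maps [2b - pi, pi] onto itself and f_H = f on the rest of
   [-pi, pi]; folding every integral onto the pairs {y, 2b - y} with y in [b, pi] reduces each
   comparison of potentials to a pointwise inequality, because on such a pair polarization only
   moves the smaller of f y, f (2b - y) to y and the larger to 2b - y. For x in [-pi, b] the
   folded integrand of u_{f_H}(x) - u_f(x) is (G(x, 2b - y) - G(x, y)) (f y - min (f y) (f (2b - y))),
   with a weight that is strictly positive for x > -pi and b < y < pi; so equality at one such x
   forces f y <= f (2b - y) for almost every y in [b, pi], i.e. f = f_H almost everywhere. *)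

section \<open>The Green function\<close>

lemma green_commute: "green x y = green y x"
  unfolding green_def by (simp add: abs_minus_commute mult.commute)

lemma green_minus_right: "green x (-y) = green (-x) y"
  unfolding green_def by (simp add: abs_minus_commute add.commute)

lemma green_eq_ordered: "y \<le> x \<Longrightarrow> green x y = (pi - x) * (pi + y) / (2*pi)"
  unfolding green_def by (simp add: field_simps)

lemma green_measurable [measurable]: "green x \<in> borel_measurable borel"
  unfolding green_def by measurable

lemma green_bounded:
  assumes "x \<in> {-pi..pi}" "y \<in> {-pi..pi}"
  shows "\<bar>green x y\<bar> \<le> 2*pi"
proof -
  have "0 \<le> green x y \<and> green x y \<le> 2*pi" if "x \<in> {-pi..pi}" "y \<in> {-pi..pi}" "y \<le> x" for x y
  proof -
    have "(pi - x) * (pi + y) \<le> (2*pi) * (2*pi)" using that by (intro mult_mono) auto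
    with that show ?thesis by (simp add: green_eq_ordered pos_divide_le_eq)
  qed
  from this[of x y] this[of y x] assms show ?thesis by (cases "y \<le> x") (auto simp: green_commute)
qed

lemma green_reflect_both: "green (2*b - x) (2*b - y) - green x y = b * (x + y - 2*b) / pi"
proof -
  have "\<bar>(2*b - x) - (2*b - y)\<bar> = \<bar>x - y\<bar>" by linarith
  then show ?thesis unfolding green_def by (simp add: field_simps)
qed

lemma green_reflect_right_sum:
  "green x (2*b - y) + green (2*b - x) (2*b - y) - green x y - green (2*b - x) y = 2 * b * (y - b) / pi"
proof -
  have "\<bar>x - (2*b - y)\<bar> = \<bar>(2*b - x) - y\<bar>" "\<bar>(2*b - x) - (2*b - y)\<bar> = \<bar>x - y\<bar>" by linarith+
  then show ?thesis unfolding green_def by (simp add: field_simps)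
qed

lemma green_antimono_left:
  assumes "-pi \<le> y" "y \<le> x'" "x' \<le> x"
  shows "green x y \<le> green x' y"
proof -
  have "(pi - x) * (pi + y) \<le> (pi - x') * (pi + y)" using assms by (intro mult_right_mono) auto
  with assms show ?thesis by (simp add: green_eq_ordered divide_right_mono)
qed

lemma green_le_reflect_left:
  assumes "0 < b" "b \<le> x" "x \<le> pi" "b \<le> y" "y \<le> pi"
  shows "green x (2*b - y) \<le> green (2*b - x) (2*b - y)"
proof (cases "y \<le> x")
  case True
  have "(pi - (2*b - y)) * (pi + (2*b - x)) - (pi - x) * (pi + (2*b - y))
      = 2 * ((y - b) * (pi - x) + b * (x + y - 2*b))"
    by (simp add: algebra_simps)
  moreover have "0 \<le> (y - b) * (pi - x)" "0 \<le> b * (x + y - 2*b)" using assms by simp_all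
  ultimately have "(pi - x) * (pi + (2*b - y)) \<le> (pi - (2*b - y)) * (pi + (2*b - x))"
    by (simp add: le_diff_eq[symmetric])
  with True assms show ?thesis
    by (simp add: green_eq_ordered green_commute[of "2*b - x"] divide_right_mono)
next
  case False
  have "(pi - x) * (pi + (2*b - y)) \<le> (pi - (2*b - x)) * (pi + (2*b - y))"
    using assms by (intro mult_right_mono) auto
  with False assms show ?thesis by (simp add: green_eq_ordered divide_right_mono)
qed

lemma green_le_reflect_right:
  assumes "0 < b" "-pi \<le> x" "x \<le> b" "b \<le> y" "y \<le> pi"
  shows "green x y \<le> green x (2*b - y)"
    and "-pi < x \<Longrightarrow> b < y \<Longrightarrow> y < pi \<Longrightarrow> green x y < green x (2*b - y)"
proof -
  have gxy: "green x y = (pi - y) * (pi + x) / (2*pi)"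
    using assms by (simp add: green_commute[of x] green_eq_ordered)
  have "0 \<le> green x (2*b - y) - green x y \<and>
      (-pi < x \<longrightarrow> b < y \<longrightarrow> y < pi \<longrightarrow> 0 < green x (2*b - y) - green x y)"
  proof (cases "x \<le> 2*b - y")
    case True
    have gz: "green x (2*b - y) = (pi - (2*b - y)) * (pi + x) / (2*pi)"
      using True by (simp add: green_commute[of x] green_eq_ordered)
    have "green x (2*b - y) - green x y = (y - b) * (pi + x) / pi"
      unfolding gz gxy by (simp add: field_simps)
    then show ?thesis using assms by simp
  next
    case False
    have gz: "green x (2*b - y) = (pi - x) * (pi + (2*b - y)) / (2*pi)"
      using False by (simp add: green_eq_ordered)
    have "green x (2*b - y) - green x y = ((b - x) * (pi - (y - b)) + b * (y - b)) / pi"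
      unfolding gz gxy by (simp add: field_simps)
    moreover have "0 \<le> (b - x) * (pi - (y - b))" "b < y \<Longrightarrow> 0 < b * (y - b)" using assms by simp_all
    ultimately show ?thesis using assms by (auto intro!: divide_pos_pos add_nonneg_pos)
  qed
  then show "green x y \<le> green x (2*b - y)"
    and "-pi < x \<Longrightarrow> b < y \<Longrightarrow> y < pi \<Longrightarrow> green x y < green x (2*b - y)"
    by simp_all
qed

section \<open>Folding an integral at a reflection\<close>

lemma set_integral_reflect_interval:
  fixes h :: "real \<Rightarrow> real"
  assumes "set_integrable lborel {a..b} h"
  shows "set_integrable lborel {a..b} (\<lambda>y. h (a + b - y))"
    and "(LINT y:{a..b}|lborel. h (a + b - y)) = (LINT y:{a..b}|lborel. h y)"
proof -
  let ?k = "\<lambda>y. indicator {a..b} y *\<^sub>R h y"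
  have "integrable lborel ?k" using assms by (simp add: set_integrable_def)
  moreover have k_reflect: "(\<lambda>y. ?k (a + b + (-1) * y)) = (\<lambda>y. indicator {a..b} y *\<^sub>R h (a + b - y))"
    by (auto simp: indicator_def fun_eq_iff)
  ultimately show "set_integrable lborel {a..b} (\<lambda>y. h (a + b - y))"
    using lborel_integrable_real_affine[of ?k "-1" "a + b"] by (simp add: set_integrable_def)
  show "(LINT y:{a..b}|lborel. h (a + b - y)) = (LINT y:{a..b}|lborel. h y)"
    using lborel_integral_real_affine[of "-1" ?k "a + b"] k_reflect by (simp add: set_lebesgue_integral_def)
qed

lemma set_integral_fold:
  fixes \<Phi> :: "real \<Rightarrow> real"
  assumes "a \<le> 2*c - d" "c \<le> d" and \<Phi>: "set_integrable lborel {a..d} \<Phi>"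
  shows "set_integrable lborel {a..<2*c - d} \<Phi>"
    and "set_integrable lborel {2*c - d..d} (\<lambda>y. \<Phi> y + \<Phi> (2*c - y))"
    and "(LINT y:{a..d}|lborel. \<Phi> y) = (LINT y:{a..<2*c - d}|lborel. \<Phi> y)
           + (LINT y:{2*c - d..d}|lborel. \<Phi> y + \<Phi> (2*c - y)) / 2"
proof -
  have reflect: "2*c - d + d - y = 2*c - y" for y by simp
  show left: "set_integrable lborel {a..<2*c - d} \<Phi>"
    by (rule set_integrable_subset[OF \<Phi>]) (use assms in auto)
  have right: "set_integrable lborel {2*c - d..d} \<Phi>"
    by (rule set_integrable_subset[OF \<Phi>]) (use assms in auto)
  note right_reflected = set_integral_reflect_interval[OF right, unfolded reflect]
  show "set_integrable lborel {2*c - d..d} (\<lambda>y. \<Phi> y + \<Phi> (2*c - y))"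
    using right right_reflected(1) by (rule set_integral_add)
  have split: "{a..d} = {a..<2*c - d} \<union> {2*c - d..d}" using assms by auto
  have "(LINT y:{a..d}|lborel. \<Phi> y) = (LINT y:{a..<2*c - d}|lborel. \<Phi> y) + (LINT y:{2*c - d..d}|lborel. \<Phi> y)"
    unfolding split by (rule set_integral_Un) (use left right in auto)
  with set_integral_add(2)[OF right right_reflected(1)] right_reflected(2)
  show "(LINT y:{a..d}|lborel. \<Phi> y) = (LINT y:{a..<2*c - d}|lborel. \<Phi> y)
           + (LINT y:{2*c - d..d}|lborel. \<Phi> y + \<Phi> (2*c - y)) / 2"
    by simp
qed

lemma reflect_sum_nonneg_extend:
  fixes \<Phi> :: "real \<Rightarrow> real"
  assumes "\<And>y. y \<in> {c..d} \<Longrightarrow> 0 \<le> \<Phi> y + \<Phi> (2*c - y)" "y \<in> {2*c - d..d}"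
  shows "0 \<le> \<Phi> y + \<Phi> (2*c - y)"
  using assms(1)[of y] assms(1)[of "2*c - y"] assms(2) by (cases "c \<le> y") (auto simp: add.commute)

lemma set_integral_nonneg_fold:
  fixes \<Phi> :: "real \<Rightarrow> real"
  assumes "a \<le> 2*c - d" "c \<le> d" "set_integrable lborel {a..d} \<Phi>"
    and "\<And>y. y \<in> {a..<2*c - d} \<Longrightarrow> 0 \<le> \<Phi> y"
    and "\<And>y. y \<in> {c..d} \<Longrightarrow> 0 \<le> \<Phi> y + \<Phi> (2*c - y)"
  shows "0 \<le> (LINT y:{a..d}|lborel. \<Phi> y)"
proof -
  note fold = set_integral_fold[OF assms(1-3)]
  have "0 \<le> (LINT y:{a..<2*c - d}|lborel. \<Phi> y)"
    using set_integral_mono[OF _ fold(1), of "\<lambda>_. 0"] assms(4) by (simp add: set_integrable_def)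
  moreover have "0 \<le> (LINT y:{2*c - d..d}|lborel. \<Phi> y + \<Phi> (2*c - y))"
    using set_integral_mono[OF _ fold(2), of "\<lambda>_. 0"] reflect_sum_nonneg_extend[of c d \<Phi>, OF assms(5)]
    by (simp add: set_integrable_def)
  ultimately show ?thesis unfolding fold(3) by simp
qed

lemma AE_reflect_sum_zero_fold:
  fixes \<Phi> :: "real \<Rightarrow> real"
  assumes "a \<le> 2*c - d" "c \<le> d" "set_integrable lborel {a..d} \<Phi>"
    and "\<And>y. y \<in> {a..<2*c - d} \<Longrightarrow> \<Phi> y = 0"
    and "\<And>y. y \<in> {c..d} \<Longrightarrow> 0 \<le> \<Phi> y + \<Phi> (2*c - y)"
    and "(LINT y:{a..d}|lborel. \<Phi> y) = 0"
  shows "AE y in lborel. y \<in> {2*c - d..d} \<longrightarrow> \<Phi> y + \<Phi> (2*c - y) = 0"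
proof -
  note fold = set_integral_fold[OF assms(1-3)]
  let ?S = "\<lambda>y. indicator {2*c - d..d} y *\<^sub>R (\<Phi> y + \<Phi> (2*c - y))"
  have "(LINT y:{a..<2*c - d}|lborel. \<Phi> y) = 0"
    using set_lebesgue_integral_cong[of "{a..<2*c - d}" lborel \<Phi> "\<lambda>_. 0"] assms(4) by simp
  with fold(3) assms(6) have "integral\<^sup>L lborel ?S = 0"
    by (simp add: set_lebesgue_integral_def)
  moreover have "integrable lborel ?S"
    using fold(2) by (simp add: set_integrable_def)
  moreover have "AE y in lborel. 0 \<le> ?S y"
    using reflect_sum_nonneg_extend[of c d \<Phi>, OF assms(5)] by (intro AE_I2) (auto simp: indicator_def)
  ultimately have "AE y in lborel. ?S y = 0"
    using integral_nonneg_eq_0_iff_AE by blast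
  then show ?thesis by eventually_elim (auto simp: indicator_def)
qed

lemma AE_lborel_reflect:
  fixes P :: "real \<Rightarrow> bool"
  assumes "{x. P x} \<in> sets borel"
  shows "(AE x in lborel. P x) \<longleftrightarrow> (AE x in lborel. P (-x))"
proof -
  have "(AE x in lborel. P x) \<longleftrightarrow> (AE x in distr lborel borel uminus. P x)"
    by (simp only: lborel_distr_uminus)
  also have "\<dots> \<longleftrightarrow> (AE x in lborel. P (-x))"
    by (rule AE_distr_iff) (use assms in auto)
  finally show ?thesis .
qed

section \<open>Potentials and polarizations\<close>

lemma polar_measurable [measurable]:
  assumes [measurable]: "f \<in> borel_measurable borel"
  shows "polar b f \<in> borel_measurable borel"
  unfolding polar_def by measurable

lemma set_integrable_green_mult:
  assumes "set_integrable lborel {-pi..pi} g" "g \<in> borel_measurable borel" "x \<in> {-pi..pi}"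
  shows "set_integrable lborel {-pi..pi} (\<lambda>y. green x y * g y)"
proof (rule set_integrable_bound[where f="\<lambda>y. 2*pi * g y"])
  show "set_integrable lborel {-pi..pi} (\<lambda>y. 2*pi * g y)" using assms(1) by simp
  show "set_borel_measurable lborel {-pi..pi} (\<lambda>y. green x y * g y)"
    unfolding set_borel_measurable_def using assms(2) by measurable
  show "AE y in lborel. y \<in> {-pi..pi} \<longrightarrow> norm (green x y * g y) \<le> norm (2*pi * g y)"
    using green_bounded[OF assms(3)] by (intro AE_I2) (auto simp: abs_mult mult_right_mono)
qed

lemma upot_cong: "(\<And>y. y \<in> {-pi..pi} \<Longrightarrow> g y = h y) \<Longrightarrow> upot g = upot h"
  unfolding upot_def by (intro ext set_lebesgue_integral_cong) auto

lemma polar_cong: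
  assumes "\<And>y. y \<in> {-pi..pi} \<Longrightarrow> g y = h y" "-pi < b" "b < pi" "y \<in> {-pi..pi}"
  shows "polar b g y = polar b h y"
  using assms assms(1)[of "2*b - y"] unfolding polar_def by auto

lemma upot_reflect: "upot g x = upot (\<lambda>y. g (-y)) (-x)"
proof -
  have "upot g x = (LBINT y:{y. -y \<in> {-pi..pi}}. green x (-y) * g (-y))"
    unfolding upot_def by (rule set_integral_reflect)
  also have "{y. -y \<in> {-pi..pi}} = {-pi..pi::real}" by auto
  finally show ?thesis by (simp add: upot_def green_minus_right)
qed

lemma polar_reflect:
  assumes "-pi < b" "b < pi"
  shows "polar (-b) (\<lambda>y. g (-y)) = (\<lambda>y. polar b g (-y))"
proof
  fix y
  show "polar (-b) (\<lambda>y. g (-y)) y = polar b g (-y)"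
    using assms unfolding polar_def by (cases "y = -b") (auto simp: max.commute min.commute add.commute)
qed

(* The conclusion of the theorem as a predicate, so that it can be transported along the
   reflection x |-> -x and along changes of f outside [-pi, pi]. *)
definition polarization_comparison ::
    "(real \<Rightarrow> real) \<Rightarrow> real \<Rightarrow> real set \<Rightarrow> real set \<Rightarrow> real set \<Rightarrow> bool" where
  "polarization_comparison f b I J J' \<longleftrightarrow>
    (\<forall>x\<in>I. upot f x + upot f (2*b - x) \<le> upot (polar b f) x + upot (polar b f) (2*b - x))
    \<and> (\<forall>x\<in>I. upot f x \<le> upot (polar b f) (2*b - x))
    \<and> (\<forall>x\<in>J. upot f x \<le> upot (polar b f) x)
    \<and> ((\<exists>x\<in>J'. upot f x = upot (polar b f) x) \<longleftrightarrow> (\<forall>x\<in>J'. upot f x = upot (polar b f) x))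
    \<and> ((\<forall>x\<in>J'. upot f x = upot (polar b f) x) \<longleftrightarrow> (\<forall>x\<in>{-pi..pi}. upot f x = upot (polar b f) x))
    \<and> ((\<forall>x\<in>{-pi..pi}. upot f x = upot (polar b f) x) \<longleftrightarrow>
           (AE x in lborel. x \<in> {-pi..pi} \<longrightarrow> f x = polar b f x))"

lemma polarization_comparison_cong:
  assumes "\<And>y. y \<in> {-pi..pi} \<Longrightarrow> g y = h y" "-pi < b" "b < pi"
  shows "polarization_comparison g b I J J' \<longleftrightarrow> polarization_comparison h b I J J'"
proof -
  have "upot g = upot h" "upot (polar b g) = upot (polar b h)"
    using assms(1) polar_cong[OF assms] by (auto intro: upot_cong)
  moreover have "(AE x in lborel. x \<in> {-pi..pi} \<longrightarrow> g x = polar b g x)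
      \<longleftrightarrow> (AE x in lborel. x \<in> {-pi..pi} \<longrightarrow> h x = polar b h x)"
    using assms(1) polar_cong[OF assms] by (intro arg_cong[where f="almost_everywhere lborel"]) auto
  ultimately show ?thesis
    unfolding polarization_comparison_def by (simp only:)
qed

lemma polarization_comparison_reflect:
  assumes [measurable]: "f \<in> borel_measurable borel" and b: "-pi < b" "b < pi"
    and reflected: "polarization_comparison (\<lambda>y. f (-y)) (-b) I J J'"
  shows "polarization_comparison f b (uminus ` I) (uminus ` J) (uminus ` J')"
proof -
  define g where "g = (\<lambda>y. f (-y))"
  define g\<^sub>H where "g\<^sub>H = polar (-b) g"
  have g\<^sub>H_eq: "g\<^sub>H = (\<lambda>y. polar b f (-y))"
    unfolding g\<^sub>H_def g_def by (rule polar_reflect[OF b])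
  have upot_f: "upot f (-x) = upot g x" "upot (polar b f) (-x) = upot g\<^sub>H x" for x
    using upot_reflect[of f "-x"] upot_reflect[of "polar b f" "-x"] by (simp_all add: g_def g\<^sub>H_eq)
  have upot_f_reflect: "upot f (2*b - -x) = upot g (2*(-b) - x)"
    "upot (polar b f) (2*b - -x) = upot g\<^sub>H (2*(-b) - x)" for x
    using upot_f[of "2*(-b) - x"] by (simp_all add: add.commute)
  have "(\<forall>x\<in>{-pi..pi}. upot f x = upot (polar b f) x) \<longleftrightarrow> (\<forall>x\<in>uminus ` {-pi..pi}. upot f x = upot (polar b f) x)"
    by simp
  also have "\<dots> \<longleftrightarrow> (\<forall>x\<in>{-pi..pi}. upot g x = upot g\<^sub>H x)"
    by (simp only: ball_simps upot_f)
  finally have all_eq: "(\<forall>x\<in>{-pi..pi}. upot f x = upot (polar b f) x) \<longleftrightarrow> (\<forall>x\<in>{-pi..pi}. upot g x = upot g\<^sub>H x)" .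
  have "(AE x in lborel. x \<in> {-pi..pi} \<longrightarrow> f x = polar b f x)
      \<longleftrightarrow> (AE x in lborel. -x \<in> {-pi..pi} \<longrightarrow> f (-x) = polar b f (-x))"
    by (rule AE_lborel_reflect) measurable
  also have "\<dots> \<longleftrightarrow> (AE x in lborel. x \<in> {-pi..pi} \<longrightarrow> g x = g\<^sub>H x)"
    by (simp add: g_def g\<^sub>H_eq minus_le_iff conj_commute)
  finally have AE_f: "(AE x in lborel. x \<in> {-pi..pi} \<longrightarrow> f x = polar b f x)
      \<longleftrightarrow> (AE x in lborel. x \<in> {-pi..pi} \<longrightarrow> g x = g\<^sub>H x)" .
  from reflected have "polarization_comparison g (-b) I J J'"
    by (simp only: g_def)
  then show ?thesis
    unfolding polarization_comparison_def ball_simps bex_simps upot_f upot_f_reflect all_eq AE_f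
      g\<^sub>H_def[symmetric] .
qed

section \<open>Polarization at a positive point\<close>

lemma weighted_min_max_ge:
  fixes u v a c a' c' :: real
  assumes "0 \<le> u" "0 \<le> v" "a \<le> a'" "c \<le> a'" "a + c \<le> a' + c'"
  shows "a * u + c * v \<le> c' * min u v + a' * max u v"
proof (cases "u \<le> v")
  case True
  have "0 \<le> (a' + c' - a - c) * u + (a' - c) * (v - u)" using assms True by simp
  with True show ?thesis by (simp add: algebra_simps)
next
  case False
  have "0 \<le> (a' + c' - a - c) * v + (a' - a) * (u - v)" using assms False by simp
  with False show ?thesis by (simp add: algebra_simps)
qed

locale polarization =
  fixes f :: "real \<Rightarrow> real" and b :: real
  assumes f_measurable [measurable]: "f \<in> borel_measurable borel"
    and f_integrable: "set_integrable lborel {-pi..pi} f"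
    and f_nonneg: "\<And>y. 0 \<le> f y"
    and b_pos: "0 < b" and b_less_pi: "b < pi"
begin

abbreviation f\<^sub>H where "f\<^sub>H \<equiv> polar b f"

lemma fold_bounds: "-pi \<le> 2*b - pi" "b \<le> pi"
  using b_pos b_less_pi by simp_all

lemma polar_left: "y \<in> {-pi..<2*b - pi} \<Longrightarrow> f\<^sub>H y = f y"
  using b_pos unfolding polar_def by auto

lemma polar_middle: "y \<in> {2*b - pi..b} \<Longrightarrow> f\<^sub>H y = max (f y) (f (2*b - y))"
  using b_pos unfolding polar_def by auto

lemma polar_right: "y \<in> {b..pi} \<Longrightarrow> f\<^sub>H y = min (f y) (f (2*b - y))"
  using b_pos b_less_pi unfolding polar_def by (cases "y = b") auto

lemma polar_nonneg: "0 \<le> f\<^sub>H y"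
  unfolding polar_def using f_nonneg by (auto simp: le_max_iff_disj)

lemma polar_integrable: "set_integrable lborel {-pi..pi} f\<^sub>H"
proof -
  note fold = set_integral_fold[OF fold_bounds f_integrable]
  have "set_integrable lborel {-pi..<2*b - pi} f\<^sub>H"
    using fold(1) set_integrable_cong[of lborel lborel "{-pi..<2*b - pi}" _ f\<^sub>H f] by (simp add: polar_left)
  moreover have "set_integrable lborel {2*b - pi..pi} f\<^sub>H"
  proof (rule set_integrable_bound[OF fold(2)])
    show "set_borel_measurable lborel {2*b - pi..pi} f\<^sub>H"
      unfolding set_borel_measurable_def by measurable
    have "f\<^sub>H y \<le> f y + f (2*b - y)" if "y \<in> {2*b - pi..pi}" for y
      using that f_nonneg[of y] f_nonneg[of "2*b - y"] polar_middle[of y] polar_right[of y]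
      by (cases "y \<le> b") auto
    then show "AE y in lborel. y \<in> {2*b - pi..pi} \<longrightarrow> norm (f\<^sub>H y) \<le> norm (f y + f (2*b - y))"
      using f_nonneg polar_nonneg by (intro AE_I2) simp
  qed
  moreover have "{-pi..pi} = {-pi..<2*b - pi} \<union> {2*b - pi..pi}" using fold_bounds by auto
  ultimately show ?thesis by (simp add: set_integrable_Un)
qed

definition excess :: "real \<Rightarrow> real \<Rightarrow> real"
  where "excess x y = green x y * (f\<^sub>H y - f y)"

lemma excess_integrable: "x \<in> {-pi..pi} \<Longrightarrow> set_integrable lborel {-pi..pi} (excess x)"
  using set_integrable_green_mult[OF polar_integrable] set_integrable_green_mult[OF f_integrable]
  unfolding excess_def right_diff_distrib by (intro set_integral_diff) auto

lemma integral_excess: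
  "x \<in> {-pi..pi} \<Longrightarrow> (LINT y:{-pi..pi}|lborel. excess x y) = upot f\<^sub>H x - upot f x"
  using set_integrable_green_mult[OF polar_integrable] set_integrable_green_mult[OF f_integrable]
  unfolding excess_def right_diff_distrib upot_def by (intro set_integral_diff) auto

lemma excess_left: "y \<in> {-pi..<2*b - pi} \<Longrightarrow> excess x y = 0"
  by (simp add: excess_def polar_left)

lemma excess_reflect_sum:
  assumes "y \<in> {b..pi}"
  shows "excess x y + excess x (2*b - y) = (green x (2*b - y) - green x y) * (f y - min (f y) (f (2*b - y)))"
proof -
  have "2*b - y \<in> {2*b - pi..b}" using assms by auto
  then have reflected: "f\<^sub>H (2*b - y) = f y + f (2*b - y) - min (f y) (f (2*b - y))"
    using polar_middle[of "2*b - y"] by (simp add: max_def min_def)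
  show ?thesis
    unfolding excess_def reflected polar_right[OF assms] by (simp add: algebra_simps)
qed

lemma upot_sum_le_polar:
  assumes x: "x \<in> {b..pi}"
  shows "upot f x + upot f (2*b - x) \<le> upot f\<^sub>H x + upot f\<^sub>H (2*b - x)"
proof -
  define x' where "x' = 2*b - x"
  have xs: "x \<in> {-pi..pi}" "x' \<in> {-pi..pi}" using x b_pos by (auto simp: x'_def)
  have "0 \<le> (LINT y:{-pi..pi}|lborel. excess x y + excess x' y)"
  proof (rule set_integral_nonneg_fold[OF fold_bounds])
    show "set_integrable lborel {-pi..pi} (\<lambda>y. excess x y + excess x' y)"
      using excess_integrable[OF xs(1)] excess_integrable[OF xs(2)] by (rule set_integral_add)
    show "0 \<le> excess x y + excess x' y" if "y \<in> {-pi..<2*b - pi}" for y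
      using that by (simp add: excess_left)
    fix y assume y: "y \<in> {b..pi}"
    define y' where "y' = 2*b - y"
    have green_gain: "(green x y' - green x y) + (green x' y' - green x' y) = 2 * b * (y - b) / pi"
      using green_reflect_right_sum[of x b y] unfolding x'_def y'_def by linarith
    have "(excess x y + excess x' y) + (excess x y' + excess x' y')
        = (excess x y + excess x y') + (excess x' y + excess x' y')"
      by (simp add: algebra_simps)
    also have "\<dots> = ((green x y' - green x y) + (green x' y' - green x' y)) * (f y - min (f y) (f y'))"
      unfolding y'_def excess_reflect_sum[OF y] by (simp add: algebra_simps)
    also have "\<dots> = (2 * b * (y - b) / pi) * (f y - min (f y) (f y'))"
      unfolding green_gain ..
    also have "\<dots> \<ge> 0" using y b_pos by simp
    finally show "0 \<le> (excess x y + excess x' y) + (excess x (2*b - y) + excess x' (2*b - y))"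
      unfolding y'_def .
  qed
  with xs show ?thesis
    using set_integral_add(2)[OF excess_integrable[OF xs(1)] excess_integrable[OF xs(2)]]
    by (simp add: integral_excess x'_def)
qed

lemma upot_le_polar:
  assumes x: "x \<in> {-pi..b}"
  shows "upot f x \<le> upot f\<^sub>H x"
proof -
  have xs: "x \<in> {-pi..pi}" using x b_less_pi by auto
  have "0 \<le> (LINT y:{-pi..pi}|lborel. excess x y)"
  proof (rule set_integral_nonneg_fold[OF fold_bounds excess_integrable[OF xs]])
    show "0 \<le> excess x y" if "y \<in> {-pi..<2*b - pi}" for y
      using that by (simp add: excess_left)
    show "0 \<le> excess x y + excess x (2*b - y)" if "y \<in> {b..pi}" for y
      unfolding excess_reflect_sum[OF that] using green_le_reflect_right(1)[of b x y] b_pos x that by simp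
  qed
  with xs show ?thesis by (simp add: integral_excess)
qed

lemma upot_le_polar_reflect:
  assumes x: "x \<in> {b..pi}"
  shows "upot f x \<le> upot f\<^sub>H (2*b - x)"
proof -
  define x' where "x' = 2*b - x"
  have xs: "x \<in> {-pi..pi}" "x' \<in> {-pi..pi}" using x b_pos by (auto simp: x'_def)
  define \<Phi> where "\<Phi> y = green x' y * f\<^sub>H y - green x y * f y" for y
  have \<Phi>_integrable: "set_integrable lborel {-pi..pi} \<Phi>"
    and \<Phi>_integral: "(LINT y:{-pi..pi}|lborel. \<Phi> y) = upot f\<^sub>H x' - upot f x"
    using set_integrable_green_mult[OF polar_integrable _ xs(2)] set_integrable_green_mult[OF f_integrable _ xs(1)]
    unfolding \<Phi>_def upot_def by simp_all
  have "0 \<le> (LINT y:{-pi..pi}|lborel. \<Phi> y)"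
  proof (rule set_integral_nonneg_fold[OF fold_bounds \<Phi>_integrable])
    fix y assume y: "y \<in> {-pi..<2*b - pi}"
    then have "green x y \<le> green x' y" using x by (intro green_antimono_left) (auto simp: x'_def)
    with y f_nonneg[of y] show "0 \<le> \<Phi> y"
      by (simp add: \<Phi>_def polar_left mult_right_mono)
  next
    fix y assume y: "y \<in> {b..pi}"
    define y' where "y' = 2*b - y"
    have "y' \<in> {2*b - pi..b}" using y by (auto simp: y'_def)
    have "green x y * f y + green x y' * f y' \<le> green x' y * min (f y) (f y') + green x' y' * max (f y) (f y')"
    proof (rule weighted_min_max_ge[OF f_nonneg f_nonneg])
      have "0 \<le> b * (x + y - 2*b) / pi" using b_pos x y by simp
      then show "green x y \<le> green x' y'"
        using green_reflect_both[of b x y] by (simp add: x'_def y'_def)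
      show "green x y' \<le> green x' y'"
        using green_le_reflect_left[of b x y] b_pos x y by (simp add: x'_def y'_def)
      have "0 \<le> 2 * b * (x - b) / pi" using b_pos x by simp
      then show "green x y + green x y' \<le> green x' y' + green x' y"
        using green_reflect_right_sum[of y b x]
        by (simp add: x'_def y'_def green_commute[of y] green_commute[of "2*b - y"])
    qed
    moreover have "f\<^sub>H y = min (f y) (f y')" "f\<^sub>H y' = max (f y) (f y')"
      using polar_right[OF y] polar_middle[OF \<open>y' \<in> {2*b - pi..b}\<close>] by (simp_all add: y'_def max.commute)
    ultimately show "0 \<le> \<Phi> y + \<Phi> (2*b - y)"
      by (simp add: \<Phi>_def y'_def[symmetric])
  qed
  with \<Phi>_integral show ?thesis by (simp add: x'_def)
qed

lemma polar_eq_if_excess_reflect_sum_eq_0: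
  assumes x: "x \<in> {-pi<..b}" and y: "y \<in> {b<..<pi}"
    and zero: "excess x y + excess x (2*b - y) = 0"
  shows "f\<^sub>H y = f y" and "f\<^sub>H (2*b - y) = f (2*b - y)"
proof -
  have "0 < green x (2*b - y) - green x y"
    using green_le_reflect_right(2)[of b x y] b_pos x y by simp
  with zero excess_reflect_sum[of y x] y have "f y \<le> f (2*b - y)"
    by (simp add: min_def split: if_splits)
  moreover have "2*b - y \<in> {2*b - pi..b}" using y by auto
  ultimately show "f\<^sub>H y = f y" and "f\<^sub>H (2*b - y) = f (2*b - y)"
    using polar_right[of y] polar_middle[of "2*b - y"] y by simp_all
qed

lemma AE_eq_polar_if_upot_eq:
  assumes x: "x \<in> {-pi<..b}" and eq: "upot f x = upot f\<^sub>H x"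
  shows "AE y in lborel. y \<in> {-pi..pi} \<longrightarrow> f y = f\<^sub>H y"
proof -
  have xs: "x \<in> {-pi..pi}" using x b_less_pi by auto
  have "AE y in lborel. y \<in> {2*b - pi..pi} \<longrightarrow> excess x y + excess x (2*b - y) = 0"
  proof (rule AE_reflect_sum_zero_fold[OF fold_bounds excess_integrable[OF xs]])
    show "excess x y = 0" if "y \<in> {-pi..<2*b - pi}" for y
      using that by (simp add: excess_left)
    show "0 \<le> excess x y + excess x (2*b - y)" if "y \<in> {b..pi}" for y
      unfolding excess_reflect_sum[OF that] using green_le_reflect_right(1)[of b x y] b_pos x that by simp
    show "(LINT y:{-pi..pi}|lborel. excess x y) = 0"
      using eq xs by (simp add: integral_excess)
  qed
  then show ?thesis
    using AE_lborel_singleton[of "2*b - pi"] AE_lborel_singleton[of b] AE_lborel_singleton[of pi]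
  proof eventually_elim
    case (elim y)
    consider "y \<notin> {-pi..pi}" | "y \<in> {-pi..<2*b - pi}" | "y \<in> {b<..<pi}" | "2*b - y \<in> {b<..<pi}"
      using elim by fastforce
    then show ?case
    proof cases
      case 3
      with elim show ?thesis using polar_eq_if_excess_reflect_sum_eq_0(1)[OF x] by auto
    next
      case 4
      with elim show ?thesis using polar_eq_if_excess_reflect_sum_eq_0(2)[OF x, of "2*b - y"] by auto
    qed (auto simp: polar_left)
  qed
qed

lemma upot_eq_polar_if_AE_eq:
  assumes x: "x \<in> {-pi..pi}" and ae: "AE y in lborel. y \<in> {-pi..pi} \<longrightarrow> f y = f\<^sub>H y"
  shows "upot f x = upot f\<^sub>H x"
proof -
  have "(LINT y:{-pi..pi}|lborel. excess x y) = (LINT y:{-pi..pi}|lborel. 0)"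
  proof (rule set_lebesgue_integral_cong_AE)
    show "excess x \<in> borel_measurable lborel" unfolding excess_def by measurable
    show "AE y\<in>{-pi..pi} in lborel. excess x y = 0" using ae by eventually_elim (simp add: excess_def)
  qed auto
  with x show ?thesis by (simp add: integral_excess)
qed

theorem polarization_comparison_pos: "polarization_comparison f b {b..pi} {-pi..b} {-pi<..b}"
proof -
  have "b \<in> {-pi<..b}" "{-pi<..b} \<subseteq> {-pi..pi}" using b_pos b_less_pi by auto
  then show ?thesis
    unfolding polarization_comparison_def
    using upot_sum_le_polar upot_le_polar_reflect upot_le_polar AE_eq_polar_if_upot_eq upot_eq_polar_if_AE_eq
    by blast
qed

end

lemma polarization_comparison_borel:
  assumes "f \<in> borel_measurable borel" "set_integrable lborel {-pi..pi} f" "\<And>y. 0 \<le> f y"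
    and b: "-pi < b" "b < pi" "b \<noteq> 0"
  shows "polarization_comparison f b (if 0 < b then {b..pi} else {-pi..b})
    (if 0 < b then {-pi..b} else {b..pi}) (if 0 < b then {-pi<..b} else {b..<pi})"
proof (cases "0 < b")
  case True
  interpret polarization f b
    using assms True by unfold_locales
  show ?thesis using polarization_comparison_pos True by simp
next
  case False
  interpret polarization "\<lambda>y. f (-y)" "-b"
    using assms set_integral_reflect_interval(1)[of "-pi" pi f] False by unfold_locales auto
  show ?thesis using polarization_comparison_reflect[OF assms(1) b(1,2) polarization_comparison_pos] False
    by simp
qed

theorem lemma4p3:
  fixes f :: "real \<Rightarrow> real" and b :: real
  assumes f_int: "set_integrable lborel {-pi..pi} f"
    and f_nonneg: "\<And>x. x \<in> {-pi..pi} \<Longrightarrow> 0 \<le> f x"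
    and b_range: "-pi < b" "b < pi" "b \<noteq> 0"
  defines "I \<equiv> (if 0 < b then {b..pi} else {-pi..b})"
    and "J \<equiv> (if 0 < b then {-pi..b} else {b..pi})"
    and "J' \<equiv> (if 0 < b then {-pi<..b} else {b..<pi})"
  shows "(\<forall>x\<in>I. upot f x + upot f (2*b - x) \<le> upot (polar b f) x + upot (polar b f) (2*b - x))
    \<and> (\<forall>x\<in>I. upot f x \<le> upot (polar b f) (2*b - x))
    \<and> (\<forall>x\<in>J. upot f x \<le> upot (polar b f) x)
    \<and> ((\<exists>x\<in>J'. upot f x = upot (polar b f) x) \<longleftrightarrow> (\<forall>x\<in>J'. upot f x = upot (polar b f) x))
    \<and> ((\<forall>x\<in>J'. upot f x = upot (polar b f) x) \<longleftrightarrow> (\<forall>x\<in>{-pi..pi}. upot f x = upot (polar b f) x))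
    \<and> ((\<forall>x\<in>{-pi..pi}. upot f x = upot (polar b f) x) \<longleftrightarrow>
           (AE x in lborel. x \<in> {-pi..pi} \<longrightarrow> f x = polar b f x))"
proof -
  define F where "F = (\<lambda>y. indicator {-pi..pi} y * f y)"
  have F_eq: "F y = f y" if "y \<in> {-pi..pi}" for y
    using that by (simp add: F_def)
  have "F \<in> borel_measurable borel"
    using borel_measurable_integrable[OF f_int[unfolded set_integrable_def]] by (simp add: F_def)
  moreover have "set_integrable lborel {-pi..pi} F"
    using f_int set_integrable_cong[of lborel lborel "{-pi..pi}" _ F f] F_eq by simp
  moreover have "0 \<le> F y" for y
    using f_nonneg by (simp add: F_def indicator_def)
  ultimately have "polarization_comparison F b I J J'"
    unfolding I_def J_def J'_def using b_range by (rule polarization_comparison_borel)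
  then have "polarization_comparison f b I J J'"
    using polarization_comparison_cong[OF F_eq b_range(1,2)] by simp
  then show ?thesis
    unfolding polarization_comparison_def .
qed

end
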